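(* Let $S$ be a profinite semigroup, let $\operatorname{End} S$ be the monoid of continuous endomorphisms of $S$ and $\operatorname{Aut} S$ the group of continuous automorphisms of $S$, both equipped with the compact-open topology. Then $\operatorname{End} S$ (respectively, $\operatorname{Aut} S$) is compact if and only if $S$ admits a fundamental system of open fully invariant (respectively, characteristic) congruences. Moreover, if $\operatorname{End} S$ (respectively, $\operatorname{Aut} S$) is compact, then it is profinite and the compact-open topology on it coincides with the topology of pointwise convergence.
   Context: A congruence $\rho$ on $S$ is open if it is an open subset of $S\times S$. A congruence $\rho$ is fully invariant if for every continuous endomorphism $f$ of $S$, $(x,y)\in\rho$ implies $(f(x),f(y))\in\rho$; it is characteristic if this holds for every continuous automorphism $f$ of $S$. A fundamental system of open fully invariant (resp. characteristic) congruences is a family of such congruences such that every open congruence on $S$ contains a member of the family (i.e., a fundamental system of entourages for the unique uniformity of $S$, whose entourages are the neighbourhoods of the diagonal). Profinite means compact, Hausdorff and totally disconnected (as a topological monoid/group). *)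

theory Defs
  imports "HOL-Analysis.Analysis"
begin

definition totally_disconnected_space :: "'a topology \<Rightarrow> bool" where
  "totally_disconnected_space X \<longleftrightarrow>
     (\<forall>x \<in> topspace X. connected_component_of_set X x = {x})"

definition profinite_semigroup :: "'a::{semigroup_mult,topological_space} itself \<Rightarrow> bool" where
  "profinite_semigroup (_::'a itself) \<longleftrightarrow>
     compact_space (euclidean :: 'a topology) \<and> Hausdorff_space (euclidean :: 'a topology) \<and>
     totally_disconnected_space (euclidean :: 'a topology) \<and>
     continuous_map (prod_topology euclidean euclidean) (euclidean :: 'a topology) (\<lambda>(x,y). x * y)"

definition cont_End :: "('a::{semigroup_mult,topological_space} \<Rightarrow> 'a) set" where
  "cont_End = {f. continuous_map euclidean euclidean f \<and> (\<forall>x y. f (x * y) = f x * f y)}"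

definition cont_Aut :: "('a::{semigroup_mult,topological_space} \<Rightarrow> 'a) set" where
  "cont_Aut = {f \<in> cont_End. homeomorphic_map euclidean euclidean f}"

definition compact_open_topology ::
  "('a::topological_space \<Rightarrow> 'b::topological_space) set \<Rightarrow> ('a \<Rightarrow> 'b) topology" where
  "compact_open_topology E =
     topology_generated_by {{f \<in> E. f ` K \<subseteq> U} | K U. compact K \<and> open U}"

definition pointwise_topology ::
  "('a \<Rightarrow> 'b::topological_space) set \<Rightarrow> ('a \<Rightarrow> 'b) topology" where
  "pointwise_topology E = subtopology (product_topology (\<lambda>_. euclidean) UNIV) E"

definition profinite_comp_monoid :: "('a \<Rightarrow> 'a) topology \<Rightarrow> bool" where
  "profinite_comp_monoid T \<longleftrightarrow>
     compact_space T \<and> Hausdorff_space T \<and> totally_disconnected_space T \<and>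
     continuous_map (prod_topology T T) T (\<lambda>(f,g). f \<circ> g)"

definition profinite_comp_group :: "('a \<Rightarrow> 'a) topology \<Rightarrow> bool" where
  "profinite_comp_group T \<longleftrightarrow> profinite_comp_monoid T \<and> continuous_map T T inv"

definition semigroup_congruence :: "('a::semigroup_mult \<times> 'a) set \<Rightarrow> bool" where
  "semigroup_congruence \<rho> \<longleftrightarrow> equiv UNIV \<rho> \<and>
     (\<forall>x y z. (x, y) \<in> \<rho> \<longrightarrow> (z * x, z * y) \<in> \<rho> \<and> (x * z, y * z) \<in> \<rho>)"

definition invariant_under :: "('a \<Rightarrow> 'a) set \<Rightarrow> ('a \<times> 'a) set \<Rightarrow> bool" where
  "invariant_under F \<rho> \<longleftrightarrow> (\<forall>f \<in> F. \<forall>x y. (x, y) \<in> \<rho> \<longrightarrow> (f x, f y) \<in> \<rho>)"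

text \<open>S admits a fundamental system of open congruences invariant under F
  (F = End S: fully invariant; F = Aut S: characteristic).\<close>
definition has_fundamental_system_invariant ::
  "('a::{semigroup_mult,topological_space} \<Rightarrow> 'a) set \<Rightarrow> bool" where
  "has_fundamental_system_invariant F \<longleftrightarrow>
     (\<exists>\<C>. (\<forall>\<sigma> \<in> \<C>. semigroup_congruence \<sigma> \<and> open \<sigma> \<and> invariant_under F \<sigma>) \<and>
          (\<forall>\<rho>. semigroup_congruence \<rho> \<and> open \<rho> \<longrightarrow> (\<exists>\<sigma> \<in> \<C>. \<sigma> \<subseteq> \<rho>)))"

end

theory Submission
  imports Defs
begin

text \<open>
  In a profinite semigroup S every neighbourhood of the diagonal contains an open congruence
  (intersect the syntactic congruences of finitely many small clopen sets), and every open
  congruence has finitely many classes.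

  If a set E of continuous endomorphisms is compact in the compact-open topology, evaluation
  E \<times> S \<rightarrow> S is jointly continuous, so by the tube lemma the largest E-invariant congruence
  {(x, y). \<forall>f\<in>E. (f x, f y) \<in> \<rho>} inside an open congruence \<rho> is again open. Conversely, given
  a fundamental system of E-invariant open congruences, every compact-open neighbourhood of
  f \<in> E is a pointwise one, and End S, resp. Aut S, is cut out of the compact space of all maps S \<rightarrow> S by
  closed conditions: being a homomorphism, and preserving, resp. preserving and reflecting,
  each congruence of the system (continuity, injectivity and surjectivity follow from these).
  Finally a continuous bijection from a compact space onto the Hausdorff space of pointwise
  convergence is a homeomorphism, which identifies the two topologies.
\<close>

lemma open_tube_compactin:
  assumes "compactin X K" "openin (prod_topology X euclidean) W"
  shows "open {y. \<forall>x\<in>K. (x, y) \<in> W}"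
proof (subst open_subopen, intro ballI)
  fix y assume "y \<in> {y. \<forall>x\<in>K. (x, y) \<in> W}"
  then have "K \<times> {y} \<subseteq> W" by auto
  moreover have "y \<in> topspace euclidean" by simp
  ultimately obtain U V where "openin euclidean V" "y \<in> V" "K \<subseteq> U" "U \<times> V \<subseteq> W"
    using tube_lemma_left[OF assms(2,1)] by meson
  then have "open V" "V \<subseteq> {y. \<forall>x\<in>K. (x, y) \<in> W}" by auto
  with \<open>y \<in> V\<close> show "\<exists>T. open T \<and> y \<in> T \<and> T \<subseteq> {y. \<forall>x\<in>K. (x, y) \<in> W}"
    by blast
qed

lemma open_agree_on_clopen:
  assumes "open D" "closed D" "continuous_on UNIV f" "continuous_on UNIV g"
  shows "open {p. f p \<in> D \<longleftrightarrow> g p \<in> D}"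
proof -
  have "{p. f p \<in> D \<longleftrightarrow> g p \<in> D} = (f -` D \<inter> g -` D) \<union> (f -` (-D) \<inter> g -` (-D))"
    by auto
  moreover have "open (f -` D \<inter> g -` D)" "open (f -` (-D) \<inter> g -` (-D))"
    using assms by (auto intro!: open_Int open_vimage)
  ultimately show ?thesis by (simp add: open_Un)
qed

lemma open_forall_agree_on_clopen:
  fixes f g :: "'c::topological_space \<Rightarrow> 'b::topological_space \<Rightarrow> 'd::topological_space"
  assumes "compact (UNIV :: 'c set)" "open D" "closed D"
    and "continuous_on UNIV (\<lambda>p. f (fst p) (snd p))" "continuous_on UNIV (\<lambda>p. g (fst p) (snd p))"
  shows "open {y. \<forall>c. f c y \<in> D \<longleftrightarrow> g c y \<in> D}"
  using open_tube_compactin[of euclidean UNIV "{p. f (fst p) (snd p) \<in> D \<longleftrightarrow> g (fst p) (snd p) \<in> D}"]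
    open_agree_on_clopen[OF assms(2-5)] assms(1) by simp

lemma open_Image_singleton:
  assumes "open (r :: ('a::topological_space \<times> 'b::topological_space) set)"
  shows "open (r `` {x})"
proof -
  have "continuous_on UNIV (\<lambda>y::'b. (x, y))"
    by (rule continuous_on_Pair[OF continuous_on_const continuous_on_id])
  from open_vimage[OF assms this] show ?thesis
    by (simp add: vimage_def Image_singleton)
qed

lemma closed_if_open_equiv:
  assumes "equiv UNIV r" "open (r :: ('a::topological_space \<times> 'a) set)"
  shows "closed r"
proof -
  have "sym r" "trans r"
    using assms(1) by (auto elim: equivE)
  have eq: "-r = (\<Union>p\<in>-r. r `` {fst p} \<times> r `` {snd p})"
  proof (intro equalityI subsetI)
    fix q assume "q \<in> -r"
    then show "q \<in> (\<Union>p\<in>-r. r `` {fst p} \<times> r `` {snd p})"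
      using equiv_class_self[OF assms(1)] by (intro UN_I[of q]) (auto simp: mem_Times_iff)
  next
    fix q assume "q \<in> (\<Union>p\<in>-r. r `` {fst p} \<times> r `` {snd p})"
    then obtain a b where ab: "(a, b) \<notin> r" "(a, fst q) \<in> r" "(b, snd q) \<in> r" by auto
    show "q \<in> -r"
    proof
      assume "q \<in> r"
      then have "(a, snd q) \<in> r"
        using transD[OF \<open>trans r\<close> ab(2)] by simp
      moreover have "(snd q, b) \<in> r"
        using symD[OF \<open>sym r\<close> ab(3)] .
      ultimately show False
        using transD[OF \<open>trans r\<close>] ab(1) by blast
    qed
  qed
  have "open (-r)"
    by (subst eq) (intro open_UN ballI open_Times open_Image_singleton[OF assms(2)])
  then show ?thesis by (simp add: closed_open)
qed

lemma finite_quotient_open_equiv: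
  fixes r :: "('a::topological_space \<times> 'a) set"
  assumes "compact (UNIV :: 'a set)" "equiv UNIV r" "open r"
  shows "finite (UNIV // r)"
proof -
  obtain X where X: "finite X" "UNIV \<subseteq> (\<Union>x\<in>X. r `` {x})"
  proof (rule compactE_image[OF assms(1)])
    show "open (r `` {x})" for x
      using open_Image_singleton[OF assms(3)] .
    show "UNIV \<subseteq> (\<Union>x\<in>UNIV. r `` {x})"
      using equiv_class_self[OF assms(2)] by blast
  qed (use that in blast)
  have "UNIV // r \<subseteq> (\<lambda>x. r `` {x}) ` X"
  proof
    fix C assume "C \<in> UNIV // r"
    then obtain y where y: "C = r `` {y}" by (rule quotientE)
    obtain x where "x \<in> X" "(x, y) \<in> r" using X(2) by blast
    then have "r `` {x} = C"
      using y equiv_class_eq[OF assms(2)] by blast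
    with \<open>x \<in> X\<close> show "C \<in> (\<lambda>x. r `` {x}) ` X" by blast
  qed
  then show ?thesis using X(1) finite_subset by blast
qed

lemma totally_disconnected_space_if_clopen_separated:
  assumes "\<And>x y. x \<in> topspace X \<Longrightarrow> y \<in> topspace X \<Longrightarrow> x \<noteq> y \<Longrightarrow>
             \<exists>T. closedin X T \<and> openin X T \<and> x \<in> T \<and> y \<notin> T"
  shows "totally_disconnected_space X"
  unfolding totally_disconnected_space_def
proof (intro ballI)
  fix x assume x: "x \<in> topspace X"
  have x_in: "x \<in> connected_component_of_set X x"
    using x by (simp add: connected_component_of_refl)
  have "y = x" if "y \<in> connected_component_of_set X x" for y
  proof (rule ccontr)
    assume "y \<noteq> x"
    moreover have "y \<in> topspace X"
      using that connected_component_of_subset_topspace by fastforce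
    ultimately obtain T where "closedin X T" "openin X T" "x \<in> T" "y \<notin> T"
      using assms x by metis
    then show False
      using connectedin_clopen_cases[OF connectedin_connected_component_of[of X x], where T = T]
        that x_in by (auto simp: disjnt_def)
  qed
  with x_in show "connected_component_of_set X x = {x}"
    by blast
qed

text \<open>g induces an injective, hence surjective, self-map of the finite quotient.\<close>
lemma surj_on_classes_if_preserves_reflects:
  assumes equiv: "equiv UNIV r" and "finite (UNIV // r)"
    and preserves: "\<And>x y. (x, y) \<in> r \<Longrightarrow> (g x, g y) \<in> r"
    and reflects: "\<And>x y. (g x, g y) \<in> r \<Longrightarrow> (x, y) \<in> r"
  shows "\<exists>x. (g x, y) \<in> r"
proof -
  define G where "G C = r `` (g ` C)" for C
  have G_class: "G (r `` {x}) = r `` {g x}" for x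
  proof (intro equalityI subsetI)
    fix z assume "z \<in> G (r `` {x})"
    then obtain x' where "(x, x') \<in> r" "(g x', z) \<in> r" unfolding G_def by blast
    then show "z \<in> r `` {g x}"
      using preserves equiv unfolding equiv_def trans_def by blast
  next
    fix z assume "z \<in> r `` {g x}"
    then show "z \<in> G (r `` {x})"
      unfolding G_def using equiv_class_self[OF equiv, of x] by blast
  qed
  have "G ` (UNIV // r) \<subseteq> UNIV // r"
    by (auto simp: G_class quotient_def)
  moreover have "inj_on G (UNIV // r)"
  proof (rule inj_onI)
    fix C D assume "C \<in> UNIV // r" "D \<in> UNIV // r" "G C = G D"
    then obtain x y where "C = r `` {x}" "D = r `` {y}" "r `` {g x} = r `` {g y}"
      by (auto simp: G_class quotient_def)
    then show "C = D"
      using reflects eq_equiv_class_iff[OF equiv] by blast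
  qed
  ultimately have "G ` (UNIV // r) = UNIV // r"
    using endo_inj_surj[OF assms(2)] by blast
  then have "r `` {y} \<in> G ` (UNIV // r)"
    by (simp add: quotientI)
  then obtain x where "r `` {y} = r `` {g x}"
    by (auto simp: G_class quotient_def)
  then show ?thesis
    using eq_equiv_class_iff[OF equiv] by blast
qed

lemma semigroup_congruence_equiv: "semigroup_congruence r \<Longrightarrow> equiv UNIV r"
  unfolding semigroup_congruence_def by blast

lemma semigroup_congruence_refl: "semigroup_congruence r \<Longrightarrow> (x, x) \<in> r"
  unfolding semigroup_congruence_def equiv_def refl_on_def by blast

lemma semigroup_congruence_sym: "semigroup_congruence r \<Longrightarrow> (x, y) \<in> r \<Longrightarrow> (y, x) \<in> r"
  unfolding semigroup_congruence_def equiv_def sym_def by blast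

lemma semigroup_congruence_trans:
  "semigroup_congruence r \<Longrightarrow> (x, y) \<in> r \<Longrightarrow> (y, z) \<in> r \<Longrightarrow> (x, z) \<in> r"
  unfolding semigroup_congruence_def equiv_def trans_def by blast

lemma semigroup_congruence_Inter:
  assumes "\<And>r. r \<in> A \<Longrightarrow> semigroup_congruence r"
  shows "semigroup_congruence (\<Inter>A)"
proof -
  have "refl_on UNIV (\<Inter>A)"
    unfolding refl_on_def using semigroup_congruence_refl[OF assms] by blast
  moreover have "sym (\<Inter>A)"
    unfolding sym_def using semigroup_congruence_sym[OF assms] by blast
  moreover have "trans (\<Inter>A)"
    unfolding trans_def using semigroup_congruence_trans[OF assms] by blast
  moreover have "(z * x, z * y) \<in> \<Inter>A \<and> (x * z, y * z) \<in> \<Inter>A" if "(x, y) \<in> \<Inter>A" for x y z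
    using that assms unfolding semigroup_congruence_def by blast
  ultimately show ?thesis
    unfolding semigroup_congruence_def equiv_def by auto
qed

definition syntactic_congruence :: "'a::semigroup_mult set \<Rightarrow> ('a \<times> 'a) set" where
  "syntactic_congruence D = {(x, y). (x \<in> D \<longleftrightarrow> y \<in> D) \<and> (\<forall>u. u * x \<in> D \<longleftrightarrow> u * y \<in> D)
     \<and> (\<forall>v. x * v \<in> D \<longleftrightarrow> y * v \<in> D) \<and> (\<forall>u v. u * x * v \<in> D \<longleftrightarrow> u * y * v \<in> D)}"

lemma syntactic_congruence_memD: "(x, y) \<in> syntactic_congruence D \<Longrightarrow> x \<in> D \<Longrightarrow> y \<in> D"
  unfolding syntactic_congruence_def by blast

lemma semigroup_congruence_syntactic_congruence:
  "semigroup_congruence (syntactic_congruence D)"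
proof -
  have "equiv UNIV (syntactic_congruence D)"
    unfolding syntactic_congruence_def equiv_def refl_on_def sym_def trans_def by simp
  moreover have "(z * x, z * y) \<in> syntactic_congruence D \<and> (x * z, y * z) \<in> syntactic_congruence D"
    if "(x, y) \<in> syntactic_congruence D" for x y z
  proof -
    have L: "u * x \<in> D \<longleftrightarrow> u * y \<in> D" and R: "x * v \<in> D \<longleftrightarrow> y * v \<in> D"
      and B: "u * x * v \<in> D \<longleftrightarrow> u * y * v \<in> D" for u v
      using that unfolding syntactic_congruence_def by auto
    have "u * (z * x) \<in> D \<longleftrightarrow> u * (z * y) \<in> D" "u * (z * x) * v \<in> D \<longleftrightarrow> u * (z * y) * v \<in> D"
      "x * z * v \<in> D \<longleftrightarrow> y * z * v \<in> D" "u * (x * z) \<in> D \<longleftrightarrow> u * (y * z) \<in> D"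
      "u * (x * z) * v \<in> D \<longleftrightarrow> u * (y * z) * v \<in> D" for u v
      using L[of "u * z"] B[of "u * z" v] R[of "z * v"] B[of u z] B[of u "z * v"]
      by (simp_all add: mult.assoc)
    then show ?thesis
      using L[of z] R[of z] B[of z] unfolding syntactic_congruence_def by simp
  qed
  ultimately show ?thesis
    unfolding semigroup_congruence_def by blast
qed

definition invariant_core :: "('a \<Rightarrow> 'b) set \<Rightarrow> ('b \<times> 'b) set \<Rightarrow> ('a \<times> 'a) set" where
  "invariant_core E r = {(x, y). \<forall>f\<in>E. (f x, f y) \<in> r}"

lemma semigroup_congruence_invariant_core:
  assumes "semigroup_congruence r" and hom: "\<And>f x y. f \<in> E \<Longrightarrow> f (x * y) = f x * f y"
  shows "semigroup_congruence (invariant_core E r)"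
proof -
  have "equiv UNIV (invariant_core E r)"
    using semigroup_congruence_equiv[OF assms(1)]
    unfolding invariant_core_def equiv_def refl_on_def sym_def trans_def by blast
  moreover have "(z * x, z * y) \<in> invariant_core E r \<and> (x * z, y * z) \<in> invariant_core E r"
    if "(x, y) \<in> invariant_core E r" for x y z
  proof -
    have "(f (z * x), f (z * y)) \<in> r \<and> (f (x * z), f (y * z)) \<in> r" if "f \<in> E" for f
      using \<open>(x, y) \<in> invariant_core E r\<close> assms(1) that
      unfolding invariant_core_def semigroup_congruence_def hom[OF that] by blast
    then show ?thesis
      unfolding invariant_core_def by blast
  qed
  ultimately show ?thesis
    unfolding semigroup_congruence_def by blast
qed

lemma invariant_under_invariant_core:
  "(\<And>f g. f \<in> E \<Longrightarrow> g \<in> E \<Longrightarrow> f \<circ> g \<in> E) \<Longrightarrow> invariant_under E (invariant_core E r)"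
  unfolding invariant_under_def invariant_core_def by (auto, metis comp_apply)

lemma invariant_core_subset: "id \<in> E \<Longrightarrow> invariant_core E r \<subseteq> r"
  unfolding invariant_core_def by fastforce

definition fundamental_congruences :: "('a::{semigroup_mult,topological_space} \<times> 'a) set set \<Rightarrow> bool" where
  "fundamental_congruences C \<longleftrightarrow> (\<forall>r\<in>C. semigroup_congruence r \<and> open r) \<and>
     (\<forall>r. semigroup_congruence r \<and> open r \<longrightarrow> (\<exists>s\<in>C. s \<subseteq> r))"

lemma has_fundamental_system_invariant_iff:
  "has_fundamental_system_invariant F \<longleftrightarrow>
     (\<exists>C. fundamental_congruences C \<and> (\<forall>r\<in>C. invariant_under F r))"
  unfolding has_fundamental_system_invariant_def fundamental_congruences_def
  by (simp add: ball_conj_distrib conj_ac)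

lemma fundamental_congruencesD:
  "fundamental_congruences C \<Longrightarrow> r \<in> C \<Longrightarrow> semigroup_congruence r"
  "fundamental_congruences C \<Longrightarrow> r \<in> C \<Longrightarrow> open r"
  "fundamental_congruences C \<Longrightarrow> semigroup_congruence s \<Longrightarrow> open s \<Longrightarrow> \<exists>r\<in>C. r \<subseteq> s"
  unfolding fundamental_congruences_def by blast+

section \<open>The compact-open and the pointwise topology\<close>

lemma topspace_compact_open_topology [simp]: "topspace (compact_open_topology E) = E"
proof -
  have "{f \<in> E. f ` {} \<subseteq> UNIV} \<in> {{f \<in> E. f ` K \<subseteq> U} | K U. compact K \<and> open U}"
    by blast
  then have "\<Union>{{f \<in> E. f ` K \<subseteq> U} | K U. compact K \<and> open U} = E"
    by auto
  then show ?thesis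
    unfolding compact_open_topology_def by simp
qed

lemma openin_compact_open_topology_basic:
  "compact K \<Longrightarrow> open U \<Longrightarrow> openin (compact_open_topology E) {f \<in> E. f ` K \<subseteq> U}"
  unfolding compact_open_topology_def openin_topology_generated_by_iff
  by (rule generate_topology_on.Basis) blast

lemma continuous_map_eval_compact_open:
  "continuous_map (compact_open_topology E) euclidean (\<lambda>f. f x)"
  unfolding continuous_map_def
  using openin_compact_open_topology_basic[of "{x}", where E = E] by simp

lemma pointwise_topology_eq_subtopology: "pointwise_topology E = subtopology euclidean E"
  unfolding pointwise_topology_def euclidean_product_topology ..

lemma topspace_pointwise_topology [simp]: "topspace (pointwise_topology E) = E"
  by (simp add: pointwise_topology_eq_subtopology)

lemma continuous_map_compact_open_pointwise_id:
  "continuous_map (compact_open_topology E) (pointwise_topology E) id"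
  unfolding pointwise_topology_def
  by (rule continuous_map_into_subtopology)
    (simp_all add: continuous_map_componentwise_UNIV continuous_map_eval_compact_open)

lemma Hausdorff_space_pointwise_topology:
  "Hausdorff_space (euclidean :: 'b::topological_space topology) \<Longrightarrow>
     Hausdorff_space (pointwise_topology (E :: ('a \<Rightarrow> 'b) set))"
  unfolding pointwise_topology_def
  by (simp add: Hausdorff_space_subtopology Hausdorff_space_product_topology)

lemma compact_open_eq_pointwise_if_compact:
  fixes E :: "('a::topological_space \<Rightarrow> 'b::topological_space) set"
  assumes "compact_space (compact_open_topology E)" "Hausdorff_space (euclidean :: 'b topology)"
  shows "compact_open_topology E = pointwise_topology E"
  using continuous_imp_homeomorphic_map[OF continuous_map_compact_open_pointwise_id assms(1)
      Hausdorff_space_pointwise_topology[OF assms(2)]]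
  by simp

lemma openin_pointwise_if_openin_compact_open:
  assumes basic_nbhd: "\<And>K U f. compact K \<Longrightarrow> open U \<Longrightarrow> f \<in> E \<Longrightarrow> f ` K \<subseteq> U \<Longrightarrow>
     \<exists>N. openin (pointwise_topology E) N \<and> f \<in> N \<and> N \<subseteq> {g \<in> E. g ` K \<subseteq> U}"
    and "openin (compact_open_topology E) V"
  shows "openin (pointwise_topology E) V"
proof -
  have "generate_topology_on {{f \<in> E. f ` K \<subseteq> U} | K U. compact K \<and> open U} V"
    using assms(2) unfolding compact_open_topology_def openin_topology_generated_by_iff .
  then show ?thesis
  proof (induction rule: generate_topology_on.induct)
    case (Basis s)
    then obtain K U where "compact K" "open U" "s = {f \<in> E. f ` K \<subseteq> U}" by blast
    with basic_nbhd show ?case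
      by (subst openin_subopen) blast
  qed (auto intro: openin_Int openin_Union)
qed

lemma closed_maps_pair_into:
  assumes "closed (S :: ('b::topological_space \<times> 'b) set)"
  shows "closed {g :: 'a \<Rightarrow> 'b. \<forall>x y. (x, y) \<in> R \<longrightarrow> (g x, g y) \<in> S}"
proof -
  have "{g :: 'a \<Rightarrow> 'b. \<forall>x y. (x, y) \<in> R \<longrightarrow> (g x, g y) \<in> S} = (\<Inter>(x, y)\<in>R. (\<lambda>g. (g x, g y)) -` S)"
    by auto
  moreover have "continuous_on UNIV (\<lambda>g :: 'a \<Rightarrow> 'b. (g x, g y))" for x y
    by (intro continuous_intros) simp_all
  ultimately show ?thesis
    using assms by (auto intro!: closed_INT closed_vimage)
qed

text \<open>The graph of inversion is the fibre of composition over id, and the first projection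
  of a compact product is a closed map.\<close>
lemma continuous_map_inv_if_compact:
  assumes "compact_space T" "Hausdorff_space T"
    and comp: "continuous_map (prod_topology T T) T (\<lambda>(f, g). f \<circ> g)"
    and "id \<in> topspace T" and inv: "\<And>f. f \<in> topspace T \<Longrightarrow> bij f \<and> inv f \<in> topspace T"
  shows "continuous_map T T inv"
  unfolding continuous_map_closedin
proof (intro conjI allI impI)
  show "inv \<in> topspace T \<rightarrow> topspace T" using inv by blast
  let ?G = "{p \<in> topspace (prod_topology T T). (\<lambda>(f, g). f \<circ> g) p \<in> {id}}"
  fix C assume C: "closedin T C"
  have "closedin (prod_topology T T) ?G"
    using closedin_continuous_map_preimage[OF comp closedin_Hausdorff_singleton] assms(2,4) by blast
  then have "closedin (prod_topology T T) (?G \<inter> topspace T \<times> C)"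
    using C by (simp add: closedin_Int closedin_prod_Times_iff)
  then have "closedin T (fst ` (?G \<inter> topspace T \<times> C))"
    using closed_map_fst[OF assms(1)] unfolding closed_map_def by blast
  moreover have "fst ` (?G \<inter> topspace T \<times> C) = {f \<in> topspace T. inv f \<in> C}"
  proof (intro equalityI subsetI)
    fix f assume "f \<in> fst ` (?G \<inter> topspace T \<times> C)"
    then obtain g where "f \<in> topspace T" "f \<circ> g = id" "g \<in> C" by auto
    moreover have "inv f = g"
      using calculation inv by (metis bij_is_inj comp_assoc comp_id id_comp inv_o_cancel)
    ultimately show "f \<in> {f \<in> topspace T. inv f \<in> C}" by simp
  next
    fix f assume "f \<in> {f \<in> topspace T. inv f \<in> C}"
    then show "f \<in> fst ` (?G \<inter> topspace T \<times> C)"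
      using inv by (force simp: surj_iff[symmetric] bij_is_surj)
  qed
  ultimately show "closedin T {f \<in> topspace T. inv f \<in> C}" by simp
qed

lemma cont_End_iff: "f \<in> cont_End \<longleftrightarrow> continuous_on UNIV f \<and> (\<forall>x y. f (x * y) = f x * f y)"
  unfolding cont_End_def by simp

lemma id_in_cont_End: "id \<in> cont_End"
  unfolding cont_End_iff by simp

lemma comp_in_cont_End: "f \<in> cont_End \<Longrightarrow> g \<in> cont_End \<Longrightarrow> f \<circ> g \<in> cont_End"
  unfolding cont_End_iff by (auto intro: continuous_on_compose2)

lemma cont_Aut_subset_End: "cont_Aut \<subseteq> cont_End"
  unfolding cont_Aut_def by blast

lemma id_in_cont_Aut: "id \<in> cont_Aut"
  unfolding cont_Aut_def using id_in_cont_End by simp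

lemma comp_in_cont_Aut: "f \<in> cont_Aut \<Longrightarrow> g \<in> cont_Aut \<Longrightarrow> f \<circ> g \<in> cont_Aut"
  unfolding cont_Aut_def using comp_in_cont_End homeomorphic_map_compose by blast

lemma bij_if_cont_Aut: "f \<in> cont_Aut \<Longrightarrow> bij f"
  unfolding cont_Aut_def bij_def
  using homeomorphic_imp_injective_map homeomorphic_imp_surjective_map by fastforce

lemma inv_in_cont_Aut:
  assumes "f \<in> cont_Aut"
  shows "inv f \<in> cont_Aut"
proof -
  obtain g where fg: "homeomorphic_maps euclidean euclidean f g"
    using assms homeomorphic_map_maps unfolding cont_Aut_def by blast
  then have g: "homeomorphic_map euclidean euclidean g" and gf: "\<And>x. g (f x) = x"
    and fg': "\<And>y. f (g y) = y"
    unfolding homeomorphic_maps_map by auto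
  have "inv f = g"
    using gf fg' by (intro inv_unique_comp) (auto simp: fun_eq_iff)
  moreover have "g (x * y) = g x * g y" for x y
  proof -
    have "f (g x * g y) = x * y"
      using assms fg' unfolding cont_Aut_def cont_End_iff by simp
    then show ?thesis by (metis gf)
  qed
  moreover have "continuous_on UNIV g"
    using homeomorphic_imp_continuous_map[OF g] by simp
  ultimately show ?thesis
    using g unfolding cont_Aut_def cont_End_iff by simp
qed

context
  assumes profinite: "profinite_semigroup TYPE('a::{semigroup_mult,topological_space})"
begin

lemma compact_UNIV_profinite: "compact (UNIV :: 'a set)"
  using profinite unfolding profinite_semigroup_def compact_space_def by simp

lemma Hausdorff_profinite: "Hausdorff_space (euclidean :: 'a topology)"
  using profinite unfolding profinite_semigroup_def by simp

lemma closed_iff_compact_profinite: "closed (K :: 'a set) \<longleftrightarrow> compact K"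
proof
  assume "closed K"
  then show "compact K"
    using compact_Int_closed[OF compact_UNIV_profinite] by (metis Int_UNIV_left)
next
  assume "compact K"
  then show "closed K"
    using compactin_imp_closedin[OF Hausdorff_profinite, of K] by simp
qed

lemma closed_singleton_profinite: "closed {x :: 'a}"
  by (simp add: closed_iff_compact_profinite)

lemma compact_UNIV_fun_profinite: "compact (UNIV :: ('b \<Rightarrow> 'a) set)"
proof -
  have "compact_space (product_topology (\<lambda>_::'b. euclidean :: 'a topology) UNIV)"
    using profinite unfolding compact_space_product_topology profinite_semigroup_def by simp
  then show ?thesis
    unfolding euclidean_product_topology compact_space_def by simp
qed

lemma continuous_on_mult_profinite [continuous_intros]:
  fixes f g :: "'b::topological_space \<Rightarrow> 'a"
  assumes "continuous_on UNIV f" "continuous_on UNIV g"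
  shows "continuous_on UNIV (\<lambda>p. f p * g p)"
proof -
  have "continuous_on UNIV (\<lambda>z::'a \<times> 'a. fst z * snd z)"
    using profinite unfolding profinite_semigroup_def by (simp add: case_prod_unfold)
  from continuous_on_compose2[OF this continuous_on_Pair[OF assms]] show ?thesis by simp
qed

lemma clopen_nbhd_profinite:
  assumes "open U" "(x :: 'a) \<in> U"
  obtains D where "open D" "closed D" "x \<in> D" "D \<subseteq> U"
proof -
  let ?X = "euclidean :: 'a topology"
  have "connected_component_of_set ?X x = {x}"
    using profinite unfolding profinite_semigroup_def totally_disconnected_space_def by simp
  then have "{x} \<in> connected_components_of ?X"
    unfolding connected_components_of_def by (metis UNIV_I image_eqI topspace_euclidean)
  moreover have "locally_compact_space ?X"
    using compact_imp_locally_compact_space profinite unfolding profinite_semigroup_def by blast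
  ultimately have "separated_between ?X {x} (-U)"
    using Hausdorff_profinite assms
    by (intro separated_between_compact_connected_component) (auto simp: closed_Compl)
  then show thesis
    using that unfolding separated_between by auto
qed

lemma open_syntactic_congruence:
  assumes "open D" "closed (D :: 'a set)"
  shows "open (syntactic_congruence D)"
proof -
  have cpt: "compact (UNIV :: 'a set)" "compact (UNIV :: ('a \<times> 'a) set)"
    using compact_Times[OF compact_UNIV_profinite compact_UNIV_profinite] compact_UNIV_profinite
    by simp_all
  have "open {y :: 'a \<times> 'a. fst y \<in> D \<longleftrightarrow> snd y \<in> D}"
    by (rule open_agree_on_clopen[OF assms]) (intro continuous_intros)+
  moreover have "open {y :: 'a \<times> 'a. \<forall>u. u * fst y \<in> D \<longleftrightarrow> u * snd y \<in> D}"
    by (rule open_forall_agree_on_clopen[OF cpt(1) assms]) (intro continuous_intros)+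
  moreover have "open {y :: 'a \<times> 'a. \<forall>v. fst y * v \<in> D \<longleftrightarrow> snd y * v \<in> D}"
    by (rule open_forall_agree_on_clopen[OF cpt(1) assms]) (intro continuous_intros)+
  moreover have "open {y :: 'a \<times> 'a. \<forall>c. fst c * fst y * snd c \<in> D \<longleftrightarrow> fst c * snd y * snd c \<in> D}"
    by (rule open_forall_agree_on_clopen[OF cpt(2) assms]) (intro continuous_intros)+
  moreover have "syntactic_congruence D =
      {y. fst y \<in> D \<longleftrightarrow> snd y \<in> D} \<inter> {y. \<forall>u. u * fst y \<in> D \<longleftrightarrow> u * snd y \<in> D} \<inter>
      {y. \<forall>v. fst y * v \<in> D \<longleftrightarrow> snd y * v \<in> D} \<inter>
      {y. \<forall>c. fst c * fst y * snd c \<in> D \<longleftrightarrow> fst c * snd y * snd c \<in> D}"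
    by (simp add: syntactic_congruence_def set_eq_iff split_paired_All)
  ultimately show ?thesis by (simp add: open_Int)
qed

lemma open_congruence_within:
  assumes "open (W :: ('a \<times> 'a) set)" "\<And>x. (x, x) \<in> W"
  obtains r where "semigroup_congruence r" "open r" "r \<subseteq> W"
proof -
  have "\<exists>D. open D \<and> closed D \<and> x \<in> D \<and> D \<times> D \<subseteq> W" for x
  proof -
    obtain A B where AB: "open A" "open B" "(x, x) \<in> A \<times> B" "A \<times> B \<subseteq> W"
      by (rule open_prod_elim[OF assms(1,2)])
    have "open (A \<inter> B)" "x \<in> A \<inter> B"
      using AB by auto
    then obtain D where D: "open D" "closed D" "x \<in> D" "D \<subseteq> A \<inter> B"
      by (rule clopen_nbhd_profinite)
    have "D \<times> D \<subseteq> W"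
      using D(4) AB(4) by auto
    with D show ?thesis by blast
  qed
  then obtain D where D: "\<forall>x. open (D x) \<and> closed (D x) \<and> x \<in> D x \<and> D x \<times> D x \<subseteq> W"
    by (rule exE[OF choice[OF allI]])
  obtain X where X: "finite X" "UNIV \<subseteq> (\<Union>x\<in>X. D x)"
  proof (rule compactE_image[OF compact_UNIV_profinite])
    show "open (D x)" for x using D by blast
    show "UNIV \<subseteq> (\<Union>x\<in>UNIV. D x)" using D by blast
  qed (use that in blast)
  let ?r = "\<Inter>x\<in>X. syntactic_congruence (D x)"
  have "semigroup_congruence ?r"
    by (auto intro: semigroup_congruence_Inter semigroup_congruence_syntactic_congruence)
  moreover have "open ?r"
    using X(1) D open_syntactic_congruence by (intro open_INT) blast+
  moreover have "?r \<subseteq> W"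
  proof
    fix z assume z: "z \<in> ?r"
    obtain x where x: "x \<in> X" "fst z \<in> D x" using X(2) by blast
    with z have "snd z \<in> D x"
      using syntactic_congruence_memD[of "fst z" "snd z"] by auto
    moreover have "D x \<times> D x \<subseteq> W"
      using D by blast
    ultimately show "z \<in> W"
      using x(2) by (auto simp: mem_Times_iff)
  qed
  ultimately show thesis using that by blast
qed

lemma fundamental_congruences_separate:
  assumes "fundamental_congruences C" "closed F" "open U" "F \<subseteq> (U :: 'a set)"
  obtains r where "r \<in> C" "r `` F \<subseteq> U"
proof -
  let ?W = "U \<times> U \<union> (-F) \<times> (-F)"
  have "open ?W" using assms(2,3) by (intro open_Un open_Times) auto
  moreover have "(x, x) \<in> ?W" for x using assms(4) by auto
  ultimately obtain s where "semigroup_congruence s" "open s" "s \<subseteq> ?W"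
    by (rule open_congruence_within)
  moreover obtain r where "r \<in> C" "r \<subseteq> s"
    using fundamental_congruencesD(3)[OF assms(1) calculation(1,2)] by blast
  ultimately have "r `` F \<subseteq> U"
    by auto
  with \<open>r \<in> C\<close> show thesis by (rule that)
qed

lemma continuous_map_eval_profinite:
  fixes E :: "('a \<Rightarrow> 'b::topological_space) set"
  assumes "\<And>f. f \<in> E \<Longrightarrow> continuous_on UNIV f"
  shows "continuous_map (prod_topology (compact_open_topology E) euclidean) euclidean (\<lambda>(f, x). f x)"
proof -
  let ?X = "prod_topology (compact_open_topology E) (euclidean :: 'a topology)"
  have "openin ?X {p \<in> topspace ?X. fst p (snd p) \<in> U}" if U: "open U" for U
  proof (subst openin_subopen, intro ballI)
    fix p assume "p \<in> {p \<in> topspace ?X. fst p (snd p) \<in> U}"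
    then obtain f x where p: "p = (f, x)" "f \<in> E" "f x \<in> U" by auto
    have "open (f -` U)"
      using assms[OF p(2)] U by (simp add: continuous_on_open_vimage)
    then obtain D where D: "open D" "closed D" "x \<in> D" "D \<subseteq> f -` U"
      using clopen_nbhd_profinite p(3) by blast
    have "openin (compact_open_topology E) {g \<in> E. g ` D \<subseteq> U}"
      using openin_compact_open_topology_basic[OF _ U] D(2) closed_iff_compact_profinite by blast
    with D(1) have "openin ?X ({g \<in> E. g ` D \<subseteq> U} \<times> D)"
      by (simp add: openin_prod_Times_iff)
    moreover have "{g \<in> E. g ` D \<subseteq> U} \<times> D \<subseteq> {p \<in> topspace ?X. fst p (snd p) \<in> U}"
      by auto
    ultimately show "\<exists>T. openin ?X T \<and> p \<in> T \<and> T \<subseteq> {p \<in> topspace ?X. fst p (snd p) \<in> U}"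
      using p D by blast
  qed
  then show ?thesis
    unfolding continuous_map_def by (simp add: case_prod_unfold)
qed

lemma continuous_map_eval_pair_profinite:
  fixes E :: "('a \<Rightarrow> 'b::topological_space) set"
  assumes "\<And>f. f \<in> E \<Longrightarrow> continuous_on UNIV f"
  shows "continuous_map (prod_topology (compact_open_topology E) euclidean) euclidean
           (\<lambda>(f, z). (f (fst z), f (snd z)))"
proof -
  let ?X = "prod_topology (compact_open_topology E) (euclidean :: ('a \<times> 'a) topology)"
  have "continuous_map ?X euclidean (\<lambda>(f, z). f (h z))" if "continuous_on UNIV h" for h
  proof -
    have "continuous_map ?X (prod_topology (compact_open_topology E) euclidean) (\<lambda>(f, z). (f, h z))"
      using that by (simp add: continuous_map_prod_top)
    from continuous_map_compose[OF this continuous_map_eval_profinite[OF assms]]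
    show ?thesis by (simp add: o_def case_prod_unfold)
  qed
  then have "continuous_map ?X (prod_topology euclidean euclidean) (\<lambda>(f, z). (f (fst z), f (snd z)))"
    unfolding continuous_map_pairwise by (simp add: o_def case_prod_unfold continuous_on_fst continuous_on_snd)
  then show ?thesis by simp
qed

lemma totally_disconnected_pointwise_profinite:
  "totally_disconnected_space (pointwise_topology (E :: ('b \<Rightarrow> 'a) set))"
proof (rule totally_disconnected_space_if_clopen_separated)
  fix f g assume "f \<in> topspace (pointwise_topology E)" "g \<in> topspace (pointwise_topology E)" "f \<noteq> g"
  then obtain x where "f \<in> E" "f x \<noteq> g x" by auto
  moreover have "open (-{g x})"
    using closed_singleton_profinite by (rule open_Compl)
  ultimately obtain D where D: "open D" "closed D" "f x \<in> D" "g x \<notin> D"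
    using clopen_nbhd_profinite[of "-{g x}" "f x"] by blast
  have "open {h :: 'b \<Rightarrow> 'a. h x \<in> D}" "closed {h :: 'b \<Rightarrow> 'a. h x \<in> D}"
    using open_vimage[OF D(1), of "\<lambda>h. h x"] closed_vimage[OF D(2), of "\<lambda>h. h x"]
    by (simp_all add: vimage_def)
  then have "openin (pointwise_topology E) (E \<inter> {h. h x \<in> D})"
    "closedin (pointwise_topology E) (E \<inter> {h. h x \<in> D})"
    by (simp_all add: pointwise_topology_eq_subtopology openin_open_Int closedin_closed_Int)
  with \<open>f \<in> E\<close> D show "\<exists>T. closedin (pointwise_topology E) T \<and> openin (pointwise_topology E) T \<and> f \<in> T \<and> g \<notin> T"
    by blast
qed

lemma continuous_map_comp_compact_open_profinite:
  fixes E :: "('a \<Rightarrow> 'a) set"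
  assumes "\<And>f. f \<in> E \<Longrightarrow> continuous_on UNIV f" "\<And>f g. f \<in> E \<Longrightarrow> g \<in> E \<Longrightarrow> f \<circ> g \<in> E"
    and "compact_space (compact_open_topology E)"
  shows "continuous_map (prod_topology (compact_open_topology E) (compact_open_topology E))
           (compact_open_topology E) (\<lambda>(f, g). f \<circ> g)"
proof -
  let ?T = "compact_open_topology E"
  let ?X = "prod_topology ?T ?T"
  have "continuous_map ?X euclidean (\<lambda>(f, g). f (g x))" for x
  proof -
    have "continuous_map ?X (prod_topology ?T euclidean) (\<lambda>(f, g). (f, g x))"
      by (simp add: continuous_map_prod_top continuous_map_eval_compact_open)
    from continuous_map_compose[OF this continuous_map_eval_profinite[OF assms(1)]]
    show ?thesis by (simp add: o_def case_prod_unfold)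
  qed
  then have "continuous_map ?X (pointwise_topology E) (\<lambda>(f, g). f \<circ> g)"
    unfolding pointwise_topology_def using assms(2)
    by (intro continuous_map_into_subtopology)
      (auto simp: continuous_map_componentwise_UNIV case_prod_unfold)
  then show ?thesis
    by (simp add: compact_open_eq_pointwise_if_compact[OF assms(3) Hausdorff_profinite])
qed

lemma profinite_comp_monoid_compact_open:
  fixes E :: "('a \<Rightarrow> 'a) set"
  assumes "\<And>f. f \<in> E \<Longrightarrow> continuous_on UNIV f" "\<And>f g. f \<in> E \<Longrightarrow> g \<in> E \<Longrightarrow> f \<circ> g \<in> E"
    and "compact_space (compact_open_topology E)"
  shows "profinite_comp_monoid (compact_open_topology E)"
  unfolding profinite_comp_monoid_def
  using assms(3) continuous_map_comp_compact_open_profinite[OF assms]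
    Hausdorff_space_pointwise_topology[OF Hausdorff_profinite, of E]
    totally_disconnected_pointwise_profinite[of E]
  by (simp add: compact_open_eq_pointwise_if_compact[OF assms(3) Hausdorff_profinite])

lemma profinite_comp_group_compact_open_Aut:
  assumes "compact_space (compact_open_topology (cont_Aut :: ('a \<Rightarrow> 'a) set))"
  shows "profinite_comp_group (compact_open_topology (cont_Aut :: ('a \<Rightarrow> 'a) set))"
proof -
  have "\<And>f. f \<in> cont_Aut \<Longrightarrow> continuous_on UNIV f"
    using cont_Aut_subset_End cont_End_iff by blast
  then have monoid: "profinite_comp_monoid (compact_open_topology (cont_Aut :: ('a \<Rightarrow> 'a) set))"
    by (rule profinite_comp_monoid_compact_open[OF _ comp_in_cont_Aut assms])
  then have "continuous_map (compact_open_topology cont_Aut) (compact_open_topology cont_Aut)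
      (inv :: ('a \<Rightarrow> 'a) \<Rightarrow> 'a \<Rightarrow> 'a)"
    unfolding profinite_comp_monoid_def
    by (intro continuous_map_inv_if_compact)
      (use id_in_cont_Aut bij_if_cont_Aut inv_in_cont_Aut in auto)
  with monoid show ?thesis
    unfolding profinite_comp_group_def by blast
qed

subsection \<open>From compactness to invariant congruences\<close>

lemma open_invariant_core_profinite:
  fixes E :: "('a \<Rightarrow> 'a) set"
  assumes "\<And>f. f \<in> E \<Longrightarrow> continuous_on UNIV f" "compact_space (compact_open_topology E)" "open r"
  shows "open (invariant_core E r)"
proof -
  let ?X = "prod_topology (compact_open_topology E) (euclidean :: ('a \<times> 'a) topology)"
  let ?W = "{p \<in> topspace ?X. (\<lambda>(f, z). (f (fst z), f (snd z))) p \<in> r}"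
  have "openin ?X ?W"
    using openin_continuous_map_preimage[OF continuous_map_eval_pair_profinite[OF assms(1)]] assms(3)
    by simp
  moreover have "compactin (compact_open_topology E) E"
    using assms(2) unfolding compact_space_def by simp
  ultimately have "open {z. \<forall>f\<in>E. (f, z) \<in> ?W}"
    by (intro open_tube_compactin)
  moreover have "invariant_core E r = {z. \<forall>f\<in>E. (f, z) \<in> ?W}"
    unfolding invariant_core_def by auto
  ultimately show ?thesis
    by simp
qed

lemma has_fundamental_system_invariant_if_compact:
  fixes E :: "('a \<Rightarrow> 'a) set"
  assumes "E \<subseteq> cont_End" "id \<in> E" "\<And>f g. f \<in> E \<Longrightarrow> g \<in> E \<Longrightarrow> f \<circ> g \<in> E"
    and "compact_space (compact_open_topology E)"
  shows "has_fundamental_system_invariant E"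
proof -
  let ?C = "{invariant_core E r | r. semigroup_congruence r \<and> open r}"
  have cont: "\<And>f. f \<in> E \<Longrightarrow> continuous_on UNIV f"
    using assms(1) by (auto simp: cont_End_iff)
  have hom: "\<And>f x y. f \<in> E \<Longrightarrow> f (x * y) = f x * f y"
    using assms(1) by (auto simp: cont_End_iff)
  have "semigroup_congruence s \<and> open s \<and> invariant_under E s" if s: "s \<in> ?C" for s
  proof -
    obtain r where r: "s = invariant_core E r" "semigroup_congruence r" "open r"
      using s by blast
    then show ?thesis
      using semigroup_congruence_invariant_core[OF r(2) hom] open_invariant_core_profinite[OF cont assms(4) r(3)]
        invariant_under_invariant_core[OF assms(3)] by simp
  qed
  moreover have "\<exists>s\<in>?C. s \<subseteq> r" if "semigroup_congruence r" "open r" for r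
  proof
    show "invariant_core E r \<in> ?C" using that by blast
  qed (rule invariant_core_subset[OF assms(2)])
  ultimately show ?thesis
    unfolding has_fundamental_system_invariant_iff fundamental_congruences_def
    by (intro exI[of _ ?C]) blast
qed

subsection \<open>From invariant congruences to compactness\<close>

lemma continuous_if_preserves_fundamental:
  assumes "fundamental_congruences C" and preserves: "\<And>r x y. r \<in> C \<Longrightarrow> (x, y) \<in> r \<Longrightarrow> (g x, g y) \<in> r"
  shows "continuous_on UNIV (g :: 'a \<Rightarrow> 'a)"
  unfolding continuous_on_open_vimage[OF open_UNIV]
proof (intro allI impI)
  fix B :: "'a set" assume "open B"
  show "open (g -` B \<inter> UNIV)"
  proof (subst open_subopen, intro ballI)
    fix x assume "x \<in> g -` B \<inter> UNIV"
    then obtain r where r: "r \<in> C" "r `` {g x} \<subseteq> B"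
      using fundamental_congruences_separate[OF assms(1) _ \<open>open B\<close>, of "{g x}"]
        closed_iff_compact_profinite by auto
    then have "open (r `` {x})" "x \<in> r `` {x}"
      using assms(1) open_Image_singleton semigroup_congruence_refl
      unfolding fundamental_congruences_def by blast+
    moreover have "r `` {x} \<subseteq> g -` B \<inter> UNIV"
      using r preserves by blast
    ultimately show "\<exists>T. open T \<and> x \<in> T \<and> T \<subseteq> g -` B \<inter> UNIV" by blast
  qed
qed

lemma closed_homomorphisms_profinite: "closed {g :: 'a \<Rightarrow> 'a. \<forall>x y. g (x * y) = g x * g y}"
proof -
  have "closedin (prod_topology euclidean euclidean) ((\<lambda>x::'a. (x, x)) ` topspace euclidean)"
    using Hausdorff_profinite Hausdorff_space_closedin_diagonal by blast
  moreover have "(\<lambda>x::'a. (x, x)) ` topspace euclidean = Id"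
    by auto
  ultimately have "closed (Id :: ('a \<times> 'a) set)"
    by simp
  moreover have "continuous_on UNIV (\<lambda>g :: 'a \<Rightarrow> 'a. (g (x * y), g x * g y))" for x y
    by (intro continuous_intros) simp_all
  moreover have "{g :: 'a \<Rightarrow> 'a. \<forall>x y. g (x * y) = g x * g y} =
      (\<Inter>(x, y). (\<lambda>g. (g (x * y), g x * g y)) -` Id)"
    by auto
  ultimately show ?thesis
    by (auto intro!: closed_INT closed_vimage)
qed

lemma inj_if_reflects_fundamental:
  assumes "fundamental_congruences C"
    and reflects: "\<And>r x y. r \<in> C \<Longrightarrow> (g x, g y) \<in> r \<Longrightarrow> (x, y) \<in> r"
  shows "inj (g :: 'a \<Rightarrow> 'a)"
proof (rule injI, rule ccontr)
  fix x y assume "g x = g y" "x \<noteq> y"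
  have "open (-{y})"
    using closed_singleton_profinite by (rule open_Compl)
  moreover have "{x} \<subseteq> -{y}"
    using \<open>x \<noteq> y\<close> by blast
  ultimately obtain r where r: "r \<in> C" "r `` {x} \<subseteq> -{y}"
    by (rule fundamental_congruences_separate[OF assms(1) closed_singleton_profinite])
  have "(g x, g y) \<in> r"
    unfolding \<open>g x = g y\<close> by (rule semigroup_congruence_refl[OF fundamental_congruencesD(1)[OF assms(1) r(1)]])
  with r show False
    using reflects by blast
qed

lemma surj_if_preserves_reflects_fundamental:
  assumes fund: "fundamental_congruences C" and "continuous_on UNIV (g :: 'a \<Rightarrow> 'a)"
    and preserves: "\<And>r x y. r \<in> C \<Longrightarrow> (x, y) \<in> r \<Longrightarrow> (g x, g y) \<in> r"
    and reflects: "\<And>r x y. r \<in> C \<Longrightarrow> (g x, g y) \<in> r \<Longrightarrow> (x, y) \<in> r"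
  shows "surj g"
proof (rule ccontr)
  assume "\<not> surj g"
  then obtain y where "range g \<subseteq> -{y}" by blast
  moreover have "closed (range g)"
    using compact_continuous_image[OF assms(2) compact_UNIV_profinite] closed_iff_compact_profinite
    by blast
  moreover have "open (-{y})"
    using closed_singleton_profinite by (rule open_Compl)
  ultimately obtain r where r: "r \<in> C" "r `` range g \<subseteq> -{y}"
    using fundamental_congruences_separate[OF fund] by metis
  have "equiv UNIV r" "open r"
    using fundamental_congruencesD(1,2)[OF fund r(1)] semigroup_congruence_equiv by blast+
  then have "finite (UNIV // r)"
    by (rule finite_quotient_open_equiv[OF compact_UNIV_profinite])
  then obtain x where "(g x, y) \<in> r"
    using surj_on_classes_if_preserves_reflects[OF \<open>equiv UNIV r\<close>] preserves[OF r(1)] reflects[OF r(1)]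
    by blast
  with r(2) show False by blast
qed

lemma pointwise_nbhd_if_invariant:
  fixes E :: "('a \<Rightarrow> 'a) set"
  assumes fund: "fundamental_congruences C" and inv: "\<forall>r\<in>C. invariant_under E r"
    and "\<And>f. f \<in> E \<Longrightarrow> continuous_on UNIV f"
    and "compact K" "open U" "f \<in> E" "f ` K \<subseteq> U"
  shows "\<exists>N. openin (pointwise_topology E) N \<and> f \<in> N \<and> N \<subseteq> {g \<in> E. g ` K \<subseteq> U}"
proof -
  have "compact (f ` K)"
    using compact_continuous_image continuous_on_subset assms(3,4,6) by blast
  then obtain r where r: "r \<in> C" "r `` (f ` K) \<subseteq> U"
    using fundamental_congruences_separate[OF fund _ assms(5,7)] closed_iff_compact_profinite by metis
  have cong: "semigroup_congruence r" "open r"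
    using fundamental_congruencesD(1,2)[OF fund r(1)] by blast+
  obtain R where R: "R \<subseteq> K" "finite R" "K \<subseteq> (\<Union>x\<in>R. r `` {x})"
  proof (rule compactE_image[OF \<open>compact K\<close>])
    show "open (r `` {x})" for x
      using open_Image_singleton[OF cong(2)] .
    show "K \<subseteq> (\<Union>x\<in>K. r `` {x})"
      using semigroup_congruence_refl[OF cong(1)] by blast
  qed (use that in blast)
  let ?N = "E \<inter> (\<Inter>x\<in>R. {g. g x \<in> r `` {f x}})"
  have "open {g :: 'a \<Rightarrow> 'a. g x \<in> r `` {f x}}" for x
    using open_vimage[OF open_Image_singleton[OF cong(2)], of "\<lambda>g. g x"] by (simp add: vimage_def)
  then have "openin (pointwise_topology E) ?N"
    using R(2) by (simp add: pointwise_topology_eq_subtopology openin_open_Int open_INT)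
  moreover have "f \<in> ?N"
    using assms(6) semigroup_congruence_refl[OF cong(1)] by auto
  moreover have "g k \<in> U" if "g \<in> ?N" "k \<in> K" for g k
  proof -
    obtain x where x: "x \<in> R" "(x, k) \<in> r" using R(3) \<open>k \<in> K\<close> by blast
    have "(f x, g x) \<in> r" using \<open>g \<in> ?N\<close> x(1) by blast
    moreover have "(g x, g k) \<in> r"
      using inv r(1) x(2) \<open>g \<in> ?N\<close> unfolding invariant_under_def by blast
    ultimately have "(f x, g k) \<in> r" by (rule semigroup_congruence_trans[OF cong(1)])
    then show "g k \<in> U"
      using r(2) x(1) R(1) by blast
  qed
  ultimately show ?thesis by blast
qed

lemma compact_space_compact_open_if_closed:
  fixes E :: "('a \<Rightarrow> 'a) set"
  assumes "fundamental_congruences C" "\<forall>r\<in>C. invariant_under E r"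
    and "\<And>f. f \<in> E \<Longrightarrow> continuous_on UNIV f" "closed E"
  shows "compact_space (compact_open_topology E)"
proof -
  have "compact E"
    using compact_Int_closed[OF compact_UNIV_fun_profinite assms(4)] by simp
  then have "compactin (pointwise_topology E) E"
    by (simp add: pointwise_topology_eq_subtopology compactin_subtopology)
  moreover have "continuous_map (pointwise_topology E) (compact_open_topology E) id"
    unfolding continuous_map_def
  proof (intro conjI allI impI)
    fix V assume V: "openin (compact_open_topology E) V"
    then have "{x \<in> topspace (pointwise_topology E). id x \<in> V} = V"
      using openin_subset by fastforce
    then show "openin (pointwise_topology E) {x \<in> topspace (pointwise_topology E). id x \<in> V}"
      using openin_pointwise_if_openin_compact_open[OF pointwise_nbhd_if_invariant[OF assms(1-3)] V]
      by simp
  qed simp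
  ultimately show ?thesis
    using image_compactin unfolding compact_space_def by fastforce
qed

lemma closed_cont_End_if_fundamental:
  fixes C :: "('a \<times> 'a) set set"
  assumes fund: "fundamental_congruences C" and inv: "\<forall>r\<in>C. invariant_under cont_End r"
  shows "closed (cont_End :: ('a \<Rightarrow> 'a) set)"
proof -
  let ?H = "{g :: 'a \<Rightarrow> 'a. \<forall>x y. g (x * y) = g x * g y}"
  let ?P = "\<lambda>r. {g :: 'a \<Rightarrow> 'a. \<forall>x y. (x, y) \<in> r \<longrightarrow> (g x, g y) \<in> r}"
  have eq: "cont_End = ?H \<inter> (\<Inter>r\<in>C. ?P r)"
  proof (intro equalityI subsetI)
    fix g :: "'a \<Rightarrow> 'a" assume g: "g \<in> cont_End"
    then have "g \<in> ?H"
      by (simp add: cont_End_iff)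
    moreover have "g \<in> ?P r" if "r \<in> C" for r
      using inv that g unfolding invariant_under_def by blast
    ultimately show "g \<in> ?H \<inter> (\<Inter>r\<in>C. ?P r)"
      by blast
  next
    fix g :: "'a \<Rightarrow> 'a" assume g: "g \<in> ?H \<inter> (\<Inter>r\<in>C. ?P r)"
    then have "continuous_on UNIV g"
      by (intro continuous_if_preserves_fundamental[OF fund]) blast
    with g show "g \<in> cont_End"
      unfolding cont_End_iff by blast
  qed
  have "closed (?P r)" if "r \<in> C" for r
    using fundamental_congruencesD(1,2)[OF fund that]
    by (intro closed_maps_pair_into closed_if_open_equiv semigroup_congruence_equiv)
  then have "closed (?H \<inter> (\<Inter>r\<in>C. ?P r))"
    using closed_homomorphisms_profinite by (intro closed_Int closed_INT) auto
  with eq show ?thesis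
    by simp
qed

lemma cont_Aut_eq_if_fundamental:
  fixes C :: "('a \<times> 'a) set set"
  assumes fund: "fundamental_congruences C" and inv: "\<forall>r\<in>C. invariant_under cont_Aut r"
  shows "cont_Aut = {g. \<forall>x y. g (x * y) = g x * g y} \<inter>
    (\<Inter>r\<in>C. {g. \<forall>x y. (x, y) \<in> r \<longrightarrow> (g x, g y) \<in> r} \<inter> {g. \<forall>x y. (x, y) \<in> -r \<longrightarrow> (g x, g y) \<in> -r})"
    (is "_ = ?H \<inter> (\<Inter>r\<in>C. ?P r \<inter> ?R r)")
proof (intro equalityI subsetI)
  fix f :: "'a \<Rightarrow> 'a" assume f: "f \<in> cont_Aut"
  have "(x, y) \<in> r" if "r \<in> C" "(f x, f y) \<in> r" for r x y
  proof -
    have "(inv f (f x), inv f (f y)) \<in> r"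
      using inv inv_in_cont_Aut[OF f] that unfolding invariant_under_def by blast
    then show ?thesis
      using bij_if_cont_Aut[OF f] by (simp add: bij_is_inj)
  qed
  moreover have "f \<in> ?H"
    using f cont_Aut_subset_End by (auto simp: cont_End_iff)
  moreover have "(f x, f y) \<in> r" if "r \<in> C" "(x, y) \<in> r" for r x y
    using inv that f unfolding invariant_under_def by blast
  ultimately show "f \<in> ?H \<inter> (\<Inter>r\<in>C. ?P r \<inter> ?R r)"
    by blast
next
  fix g :: "'a \<Rightarrow> 'a" assume g: "g \<in> ?H \<inter> (\<Inter>r\<in>C. ?P r \<inter> ?R r)"
  then have preserves: "\<And>r x y. r \<in> C \<Longrightarrow> (x, y) \<in> r \<Longrightarrow> (g x, g y) \<in> r"
    and reflects: "\<And>r x y. r \<in> C \<Longrightarrow> (g x, g y) \<in> r \<Longrightarrow> (x, y) \<in> r"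
    by blast+
  have "continuous_on UNIV g"
    using continuous_if_preserves_fundamental[OF fund preserves] .
  moreover have "homeomorphic_map euclidean euclidean g"
  proof (rule continuous_imp_homeomorphic_map)
    show "g ` topspace euclidean = topspace euclidean"
      using surj_if_preserves_reflects_fundamental[OF fund \<open>continuous_on UNIV g\<close> preserves reflects]
      by simp
    show "inj_on g (topspace euclidean)"
      using inj_if_reflects_fundamental[OF fund reflects] by simp
  qed (use \<open>continuous_on UNIV g\<close> profinite Hausdorff_profinite in \<open>auto simp: profinite_semigroup_def\<close>)
  ultimately show "g \<in> cont_Aut"
    using g unfolding cont_Aut_def cont_End_iff by blast
qed

lemma closed_cont_Aut_if_fundamental:
  fixes C :: "('a \<times> 'a) set set"
  assumes fund: "fundamental_congruences C" and inv: "\<forall>r\<in>C. invariant_under cont_Aut r"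
  shows "closed (cont_Aut :: ('a \<Rightarrow> 'a) set)"
proof -
  have "closed ({g :: 'a \<Rightarrow> 'a. \<forall>x y. (x, y) \<in> r \<longrightarrow> (g x, g y) \<in> r} \<inter>
      {g. \<forall>x y. (x, y) \<in> -r \<longrightarrow> (g x, g y) \<in> -r})" if "r \<in> C" for r
  proof -
    have "closed r" "closed (-r)"
      using fundamental_congruencesD(1,2)[OF fund that]
      by (auto intro: closed_if_open_equiv semigroup_congruence_equiv)
    then show ?thesis
      by (intro closed_Int closed_maps_pair_into)
  qed
  then show ?thesis
    unfolding cont_Aut_eq_if_fundamental[OF fund inv]
    using closed_homomorphisms_profinite by (intro closed_Int closed_INT) auto
qed

lemma compact_space_compact_open_End:
  "has_fundamental_system_invariant (cont_End :: ('a \<Rightarrow> 'a) set) \<Longrightarrow>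
     compact_space (compact_open_topology (cont_End :: ('a \<Rightarrow> 'a) set))"
  unfolding has_fundamental_system_invariant_iff
  using compact_space_compact_open_if_closed closed_cont_End_if_fundamental
  by (metis cont_End_iff)

lemma compact_space_compact_open_Aut:
  "has_fundamental_system_invariant (cont_Aut :: ('a \<Rightarrow> 'a) set) \<Longrightarrow>
     compact_space (compact_open_topology (cont_Aut :: ('a \<Rightarrow> 'a) set))"
  unfolding has_fundamental_system_invariant_iff
  using compact_space_compact_open_if_closed closed_cont_Aut_if_fundamental
  by (metis cont_End_iff cont_Aut_subset_End subsetD)

end

theorem theorem4:
  assumes "profinite_semigroup TYPE('a::{semigroup_mult,topological_space})"
  shows "(compact_space (compact_open_topology (cont_End :: ('a \<Rightarrow> 'a) set))
            \<longleftrightarrow> has_fundamental_system_invariant (cont_End :: ('a \<Rightarrow> 'a) set))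
       \<and> (compact_space (compact_open_topology (cont_Aut :: ('a \<Rightarrow> 'a) set))
            \<longleftrightarrow> has_fundamental_system_invariant (cont_Aut :: ('a \<Rightarrow> 'a) set))
       \<and> (compact_space (compact_open_topology (cont_End :: ('a \<Rightarrow> 'a) set)) \<longrightarrow>
            profinite_comp_monoid (compact_open_topology (cont_End :: ('a \<Rightarrow> 'a) set))
            \<and> compact_open_topology (cont_End :: ('a \<Rightarrow> 'a) set) = pointwise_topology cont_End)
       \<and> (compact_space (compact_open_topology (cont_Aut :: ('a \<Rightarrow> 'a) set)) \<longrightarrow>
            profinite_comp_group (compact_open_topology (cont_Aut :: ('a \<Rightarrow> 'a) set))
            \<and> compact_open_topology (cont_Aut :: ('a \<Rightarrow> 'a) set) = pointwise_topology cont_Aut)"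
proof -
  have cont_End: "\<And>f. f \<in> cont_End \<Longrightarrow> continuous_on UNIV (f :: 'a \<Rightarrow> 'a)"
    by (simp add: cont_End_iff)
  show ?thesis
    using has_fundamental_system_invariant_if_compact[OF assms subset_refl id_in_cont_End comp_in_cont_End]
      has_fundamental_system_invariant_if_compact[OF assms cont_Aut_subset_End id_in_cont_Aut comp_in_cont_Aut]
      compact_space_compact_open_End[OF assms] compact_space_compact_open_Aut[OF assms]
      profinite_comp_monoid_compact_open[OF assms cont_End comp_in_cont_End]
      profinite_comp_group_compact_open_Aut[OF assms]
      compact_open_eq_pointwise_if_compact[OF _ Hausdorff_profinite[OF assms]]
    by blast
qed

end
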